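(* Let $G$ be a graph, let $R\subseteq V(G)$ be such that $G[R]$ is isomorphic to $F$, and let $C\subseteq V(G)\setminus R$ be a clique in $G$ with $m$ vertices. Then one can admissibly remove from $G$ a subset of $C\cup R$ such that the remaining vertices of $C\cup R$ form a clique with at most $\max(m-1,2)$ vertices.
   Context: $F$ denotes the disjoint union of two vertex-disjoint copies of the complete bipartite graph $K_{5,5}$ (so $F$ has $20$ vertices). Removing a set $T$ of vertices from a graph $G$ is a simple admissible removal if $T$ is an independent set in $G$ and the number of edges between $T$ and $V(G)\setminus T$ is even. Removing a (not necessarily independent) set of vertices is admissible if it can be realised by a sequence of simple admissible removals, each performed in the graph remaining after the previous ones. *)

theory Defs
  imports Main
begin

definition graph :: "'a set \<Rightarrow> ('a \<Rightarrow> 'a \<Rightarrow> bool) \<Rightarrow> bool" where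
  "graph V E \<longleftrightarrow> finite V \<and> (\<forall>x y. E x y \<longrightarrow> E y x) \<and> (\<forall>x. \<not> E x x)
     \<and> (\<forall>x y. E x y \<longrightarrow> x \<in> V \<and> y \<in> V)"

definition independent :: "'a set \<Rightarrow> ('a \<Rightarrow> 'a \<Rightarrow> bool) \<Rightarrow> 'a set \<Rightarrow> bool" where
  "independent V E T \<longleftrightarrow> T \<subseteq> V \<and> (\<forall>x\<in>T. \<forall>y\<in>T. \<not> E x y)"

definition clique :: "'a set \<Rightarrow> ('a \<Rightarrow> 'a \<Rightarrow> bool) \<Rightarrow> 'a set \<Rightarrow> bool" where
  "clique V E C \<longleftrightarrow> C \<subseteq> V \<and> (\<forall>x\<in>C. \<forall>y\<in>C. x \<noteq> y \<longrightarrow> E x y)"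

definition cut_edges :: "'a set \<Rightarrow> ('a \<Rightarrow> 'a \<Rightarrow> bool) \<Rightarrow> 'a set \<Rightarrow> nat" where
  "cut_edges V E T = card {(x, y). x \<in> T \<and> y \<in> V - T \<and> E x y}"

definition simple_adm_removal :: "'a set \<Rightarrow> ('a \<Rightarrow> 'a \<Rightarrow> bool) \<Rightarrow> 'a set \<Rightarrow> bool" where
  "simple_adm_removal V E T \<longleftrightarrow> independent V E T \<and> even (cut_edges V E T)"

text \<open>Admissible removal: a sequence of simple admissible removals, each in the graph
  induced on the remaining vertices (the edge relation restricted to V is the induced graph).\<close>
inductive adm_removal :: "'a set \<Rightarrow> ('a \<Rightarrow> 'a \<Rightarrow> bool) \<Rightarrow> 'a set \<Rightarrow> bool" where
  adm_empty: "adm_removal V E {}"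
| adm_step: "simple_adm_removal V E T \<Longrightarrow> adm_removal (V - T) E X \<Longrightarrow> adm_removal V E (T \<union> X)"

text \<open>The graph F: two disjoint copies of K_{5,5} on vertices 0..19.
  Vertex i lies in copy i div 10, on side (i mod 10 < 5).\<close>
definition F_V :: "nat set" where "F_V = {0..<20}"

definition F_E :: "nat \<Rightarrow> nat \<Rightarrow> bool" where
  "F_E i j \<longleftrightarrow> i \<in> F_V \<and> j \<in> F_V \<and> i div 10 = j div 10 \<and> (i mod 10 < 5) \<noteq> (j mod 10 < 5)"

definition induced_iso_F :: "'a set \<Rightarrow> ('a \<Rightarrow> 'a \<Rightarrow> bool) \<Rightarrow> 'a set \<Rightarrow> bool" where
  "induced_iso_F V E R \<longleftrightarrow> R \<subseteq> V \<and>
     (\<exists>f. bij_betw f R F_V \<and> (\<forall>x\<in>R. \<forall>y\<in>R. E x y \<longleftrightarrow> F_E (f x) (f y)))"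

end

theory Submission
  imports Defs "HOL-Library.Disjoint_Sets"
begin

text \<open>
  The potential of a vertex set X of the current graph is twice the sum of the degrees of its
  vertices plus the number of ordered edges inside X. For an independent X it is twice the
  number of cut edges, so a simple admissible removal has potential divisible by 4; since the
  potential is additive modulo 4 along successive removals, every admissible removal has
  potential divisible by 4.

  F contains five disjoint induced copies of 2K2 (an edge from each K_{5,5}), and a case analysis
  on degree parities shows that any outside vertex can be admissibly removed together with
  part of one such copy. Thus a set S of at most five vertices of C can be removed within
  S \<union> R. Afterwards, greedily removing even-degree vertices and non-adjacent pairs of
  odd-degree vertices of R leaves a clique of R all of whose vertices have odd degree; it has at
  most two vertices since F is triangle-free. If m \<le> 3 we take S = C. Otherwise we choose S,
  a single vertex or three vertices of C, such that R \<union> S has potential divisible by 4; then so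
  has the leftover clique, whereas a nonempty odd-degree clique on at most two vertices has
  potential 2 modulo 4. Hence all of R is removed.
\<close>

section \<open>A parity potential\<close>

definition degree :: "'a set \<Rightarrow> ('a \<Rightarrow> 'a \<Rightarrow> bool) \<Rightarrow> 'a \<Rightarrow> nat" where
  "degree W E x = card {y\<in>W. E x y}"

definition arc_count :: "('a \<Rightarrow> 'a \<Rightarrow> bool) \<Rightarrow> 'a set \<Rightarrow> 'a set \<Rightarrow> nat" where
  "arc_count E A B = card {(x, y). x \<in> A \<and> y \<in> B \<and> E x y}"

definition potential :: "'a set \<Rightarrow> ('a \<Rightarrow> 'a \<Rightarrow> bool) \<Rightarrow> 'a set \<Rightarrow> nat" where
  "potential W E X = 2 * (\<Sum>x\<in>X. degree W E x) + arc_count E X X"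

lemma arc_count_eq_sum:
  assumes "finite A" "finite B"
  shows "arc_count E A B = (\<Sum>x\<in>A. card {y\<in>B. E x y})"
proof -
  have "{(x, y). x \<in> A \<and> y \<in> B \<and> E x y} = Sigma A (\<lambda>x. {y\<in>B. E x y})" by auto
  then show ?thesis unfolding arc_count_def using assms by (simp add: card_SigmaI)
qed

lemma arc_count_commute:
  assumes "symp E"
  shows "arc_count E A B = arc_count E B A"
proof -
  have "{(x, y). x \<in> B \<and> y \<in> A \<and> E x y} = prod.swap ` {(x, y). x \<in> A \<and> y \<in> B \<and> E x y}"
    using assms by (auto simp: image_iff dest: sympD)
  then show ?thesis unfolding arc_count_def by (simp add: card_image)
qed

lemma arc_count_Un_left:
  assumes "finite A" "finite B" "finite D" "A \<inter> B = {}"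
  shows "arc_count E (A \<union> B) D = arc_count E A D + arc_count E B D"
  using assms by (simp add: arc_count_eq_sum sum.union_disjoint)

lemma arc_count_Un_right:
  assumes "finite A" "finite B" "finite D" "A \<inter> B = {}"
  shows "arc_count E D (A \<union> B) = arc_count E D A + arc_count E D B"
proof -
  have "card {y\<in>A \<union> B. E x y} = card {y\<in>A. E x y} + card {y\<in>B. E x y}" for x
  proof -
    have "{y\<in>A \<union> B. E x y} = {y\<in>A. E x y} \<union> {y\<in>B. E x y}" by auto
    then show ?thesis using assms by (simp add: card_Un_disjoint disjoint_iff)
  qed
  then show ?thesis using assms by (simp add: arc_count_eq_sum sum.distrib)
qed

lemma arc_count_self_even:
  assumes "symp E" "irreflp E" "finite X"
  shows "even (arc_count E X X)"
  using assms(3)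
proof (induction rule: finite_induct)
  case empty
  then show ?case by (simp add: arc_count_def)
next
  case (insert v X)
  have "{(x, y). x \<in> {v} \<and> y \<in> {v} \<and> E x y} = {}"
    using assms(2) by (auto dest: irreflpD)
  then have "arc_count E {v} {v} = 0"
    unfolding arc_count_def by (metis card.empty)
  moreover have "arc_count E (insert v X) (insert v X)
      = arc_count E {v} {v} + arc_count E {v} X + arc_count E X {v} + arc_count E X X"
    using insert.hyps arc_count_Un_left[of "{v}" X] arc_count_Un_right[of "{v}" X]
    by (simp flip: insert_is_Un)
  moreover have "arc_count E X {v} = arc_count E {v} X"
    using arc_count_commute assms(1) by metis
  ultimately show ?case using insert.IH by simp
qed

lemma degree_Un_Diff:
  assumes "finite W" "X \<subseteq> W"
  shows "degree W E x = degree (W - X) E x + card {y\<in>X. E x y}"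
proof -
  have "{y\<in>W. E x y} = {y\<in>W - X. E x y} \<union> {y\<in>X. E x y}" using assms by auto
  moreover have "finite {y\<in>X. E x y}" using assms finite_subset[of _ W] by auto
  ultimately show ?thesis unfolding degree_def using assms by (simp add: card_Un_disjoint disjoint_iff)
qed

lemma degree_Diff_singleton:
  assumes "finite W" "v \<in> W"
  shows "degree W E x = degree (W - {v}) E x + (if E x v then 1 else 0)"
  using degree_Un_Diff[of W "{v}" E x] assms by (simp add: Collect_conv_if)

lemma potential_Diff:
  assumes sym: "symp E" and "finite W" "X \<subseteq> Y" "Y \<subseteq> W"
  shows "potential W E Y = potential W E X + potential (W - X) E (Y - X) + 4 * arc_count E (Y - X) X"
proof -
  let ?Z = "Y - X"
  have fin: "finite Y" "finite X" "finite ?Z" using assms finite_subset[of _ W] by auto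
  have Y: "Y = X \<union> ?Z" and dis: "X \<inter> ?Z = {}" using assms by auto
  have "(\<Sum>x\<in>Y. degree W E x) = (\<Sum>x\<in>X. degree W E x) + (\<Sum>x\<in>?Z. degree W E x)"
    using fin dis by (subst Y) (rule sum.union_disjoint)
  moreover have "(\<Sum>x\<in>?Z. degree W E x) = (\<Sum>x\<in>?Z. degree (W - X) E x) + arc_count E ?Z X"
    using degree_Un_Diff[of W X E] assms fin by (simp add: arc_count_eq_sum sum.distrib)
  moreover have "arc_count E Y Y = arc_count E X X + arc_count E X ?Z + arc_count E ?Z X + arc_count E ?Z ?Z"
    using fin dis arc_count_Un_left[of X ?Z] arc_count_Un_right[of X ?Z] by (subst (1 2) Y) simp
  moreover have "arc_count E X ?Z = arc_count E ?Z X" using arc_count_commute sym by metis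
  ultimately show ?thesis unfolding potential_def by simp
qed

lemma potential_clique:
  assumes "irreflp E" "clique V E Q" "finite Q"
  shows "potential W E Q = 2 * (\<Sum>x\<in>Q. degree W E x) + card Q * (card Q - 1)"
proof -
  have "{(x, y). x \<in> Q \<and> y \<in> Q \<and> E x y} = Q \<times> Q - (\<lambda>x. (x, x)) ` Q"
    using assms(1,2) unfolding clique_def by (auto simp: image_iff dest: irreflpD)
  moreover have "card ((\<lambda>x. (x, x)) ` Q) = card Q" by (rule card_image) (auto simp: inj_on_def)
  moreover have "(\<lambda>x. (x, x)) ` Q \<subseteq> Q \<times> Q" by auto
  ultimately have "arc_count E Q Q = card Q * card Q - card Q"
    unfolding arc_count_def using assms(3) by (simp add: card_Diff_subset card_cartesian_product)
  then show ?thesis unfolding potential_def by (simp add: diff_mult_distrib2)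
qed

lemma odd_clique_eq_empty_if_potential_mod4:
  assumes "irreflp E" "clique V E Q" "finite Q" "card Q \<le> 2" "\<forall>x\<in>Q. odd (degree W E x)"
    and "potential W E Q mod 4 = 0"
  shows "Q = {}"
proof -
  have "{x\<in>Q. odd (degree W E x)} = Q" using assms(5) by auto
  then obtain a where a: "(\<Sum>x\<in>Q. degree W E x) + card Q = 2 * a"
    using even_sum_iff[OF assms(3), of "degree W E"] by (metis evenE even_add)
  have "potential W E Q + 4 * card Q = 4 * a + card Q * (card Q + 1)"
    using potential_clique[OF assms(1-3), of W] a by (cases "card Q") (simp_all add: algebra_simps)
  moreover have "t mod 4 = 0" if "p + 4 * k = 4 * a + t" "p mod 4 = 0" for p k t :: nat
    using that by presburger
  ultimately have "card Q * (card Q + 1) mod 4 = 0" using assms(6) by metis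
  moreover have "card Q = 0 \<or> card Q = 1 \<or> card Q = 2" using assms(4) by linarith
  ultimately have "card Q = 0" by (elim disjE) simp_all
  then show ?thesis using assms(3) by simp
qed

section \<open>Admissible removals\<close>

lemma adm_removal_subset: "adm_removal W E X \<Longrightarrow> X \<subseteq> W"
  by (induction rule: adm_removal.induct) (auto simp: simple_adm_removal_def independent_def)

lemma adm_removal_trans:
  "adm_removal W E X \<Longrightarrow> adm_removal (W - X) E Y \<Longrightarrow> adm_removal W E (X \<union> Y)"
proof (induction arbitrary: Y rule: adm_removal.induct)
  case (adm_empty V E)
  then show ?case by simp
next
  case (adm_step V E T X)
  have "adm_removal (V - T) E (X \<union> Y)"
    using adm_step.prems by (intro adm_step.IH) (simp add: Diff_Un Diff_Int_distrib2 Int_absorb1 set_diff_eq)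
  then show ?case using adm_removal.adm_step[OF adm_step.hyps(1)] by (simp add: Un_assoc)
qed

lemma adm_removal_if_simple: "simple_adm_removal W E T \<Longrightarrow> adm_removal W E T"
  using adm_removal.adm_step[OF _ adm_removal.adm_empty] by fastforce

lemma cut_edges_independent:
  assumes "finite W" "independent W E T"
  shows "cut_edges W E T = (\<Sum>x\<in>T. degree W E x)"
proof -
  have T: "T \<subseteq> W" "\<forall>x\<in>T. \<forall>y\<in>T. \<not> E x y" using assms(2) unfolding independent_def by auto
  have "cut_edges W E T = arc_count E T (W - T)" unfolding cut_edges_def arc_count_def by simp
  also have "\<dots> = (\<Sum>x\<in>T. card {y\<in>W - T. E x y})"
    using assms(1) T(1) finite_subset[of T W] by (simp add: arc_count_eq_sum)
  also have "\<dots> = (\<Sum>x\<in>T. degree W E x)"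
    unfolding degree_def using T by (intro sum.cong) (auto intro: arg_cong[where f = card])
  finally show ?thesis .
qed

lemma potential_mod4_if_adm_removal:
  "adm_removal W E X \<Longrightarrow> finite W \<Longrightarrow> symp E \<Longrightarrow> potential W E X mod 4 = 0"
proof (induction rule: adm_removal.induct)
  case (adm_empty V E)
  then show ?case by (simp add: potential_def arc_count_def)
next
  case (adm_step V E T X)
  have ind: "independent V E T" and ev: "even (cut_edges V E T)"
    using adm_step.hyps(1) unfolding simple_adm_removal_def by auto
  have TV: "T \<subseteq> V" using ind unfolding independent_def by auto
  have XV: "X \<subseteq> V - T" using adm_removal_subset[OF adm_step.hyps(2)] .
  have "{(x, y). x \<in> T \<and> y \<in> T \<and> E x y} = {}" using ind unfolding independent_def by auto
  then have "potential V E T = 2 * cut_edges V E T"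
    unfolding potential_def arc_count_def cut_edges_independent[OF adm_step.prems(1) ind]
    by (metis card.empty add_0_right)
  then have "potential V E T mod 4 = 0" using ev by (auto elim!: evenE)
  moreover have "potential (V - T) E X mod 4 = 0" using adm_step.IH adm_step.prems by simp
  moreover have "potential V E (T \<union> X)
      = potential V E T + potential (V - T) E ((T \<union> X) - T) + 4 * arc_count E ((T \<union> X) - T) T"
    by (rule potential_Diff) (use adm_step.prems TV XV in auto)
  moreover have "(T \<union> X) - T = X" using XV by auto
  ultimately show ?case by presburger
qed

lemma potential_Diff_adm_removal_mod4:
  assumes "finite W" "symp E" "Y \<subseteq> W" "X \<subseteq> Y"
    and "adm_removal W E X" "potential W E Y mod 4 = 0"
  shows "potential (W - X) E (Y - X) mod 4 = 0"
proof -
  have "potential W E X mod 4 = 0" using potential_mod4_if_adm_removal assms by blast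
  then show ?thesis using potential_Diff[of E W X Y] assms by presburger
qed

lemma simple_adm_removal_singleton:
  assumes "finite W" "irreflp E" "x \<in> W"
  shows "simple_adm_removal W E {x} \<longleftrightarrow> even (degree W E x)"
proof -
  have "independent W E {x}" using assms unfolding independent_def by (auto dest: irreflpD)
  then show ?thesis
    using cut_edges_independent[OF assms(1)] unfolding simple_adm_removal_def by simp
qed

lemma simple_adm_removal_pair:
  assumes "finite W" "symp E" "irreflp E"
    and "x \<in> W" "y \<in> W" "x \<noteq> y" "\<not> E x y"
  shows "simple_adm_removal W E {x, y} \<longleftrightarrow> even (degree W E x + degree W E y)"
proof -
  have "independent W E {x, y}" using assms unfolding independent_def by (auto dest: irreflpD sympD)
  then show ?thesis
    using cut_edges_independent[OF assms(1)] assms(6) unfolding simple_adm_removal_def by simp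
qed

lemma adm_removal_leaving_odd_clique:
  assumes sym: "symp E" and irr: "irreflp E"
  shows "finite W \<Longrightarrow> Y \<subseteq> W \<Longrightarrow> \<exists>X\<subseteq>Y. adm_removal W E X \<and> clique W E (Y - X)
           \<and> (\<forall>x\<in>Y - X. odd (degree (W - X) E x))"
proof (induction "card Y" arbitrary: W Y rule: less_induct)
  case less
  show ?case
  proof (cases "\<exists>T. T \<noteq> {} \<and> T \<subseteq> Y \<and> simple_adm_removal W E T")
    case True
    then obtain T where T: "T \<noteq> {}" "T \<subseteq> Y" "simple_adm_removal W E T" by blast
    have "card (Y - T) < card Y"
      using T less.prems finite_subset[of Y W] by (intro psubset_card_mono) auto
    then obtain X where X: "X \<subseteq> Y - T" "adm_removal (W - T) E X" "clique (W - T) E (Y - T - X)"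
        "\<forall>x\<in>Y - T - X. odd (degree (W - T - X) E x)"
      using less.hyps[of "Y - T" "W - T"] less.prems by (meson Diff_mono finite_Diff order_refl)
    have eqs: "Y - T - X = Y - (T \<union> X)" "W - T - X = W - (T \<union> X)" by auto
    have "adm_removal W E (T \<union> X)" using adm_removal.adm_step[OF T(3) X(2)] .
    moreover have "clique W E (Y - (T \<union> X))"
      using X(3) less.prems(2) unfolding clique_def eqs by blast
    ultimately show ?thesis using T(2) X(1,4) unfolding eqs by blast
  next
    case False
    then have no_simple: "\<not> simple_adm_removal W E T" if "T \<noteq> {}" "T \<subseteq> Y" for T
      using that by blast
    have odd_degree: "odd (degree W E x)" if "x \<in> Y" for x
      using no_simple[of "{x}"] simple_adm_removal_singleton[OF less.prems(1) irr, of x] that less.prems(2)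
      by auto
    have "E x y" if xy: "x \<in> Y" "y \<in> Y" "x \<noteq> y" for x y
    proof (rule ccontr)
      assume "\<not> E x y"
      then have "simple_adm_removal W E {x, y}"
        using simple_adm_removal_pair[OF less.prems(1) sym irr, of x y] odd_degree less.prems(2) xy by auto
      then show False using no_simple[of "{x, y}"] xy by simp
    qed
    then have "clique W E Y" using less.prems(2) unfolding clique_def by blast
    then show ?thesis using odd_degree adm_removal.adm_empty by (intro exI[of _ "{}"]) simp
  qed
qed

lemma adm_removal_singleton:
  assumes "finite W" "irreflp E" "x \<in> W" "even (degree W E x)"
  shows "adm_removal W E {x}"
  using assms simple_adm_removal_singleton adm_removal_if_simple by metis

lemma adm_removal_pair:
  assumes "finite W" "symp E" "irreflp E" "x \<in> W" "y \<in> W" "x \<noteq> y" "\<not> E x y"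
    and "odd (degree W E x)" "odd (degree W E y)"
  shows "adm_removal W E {x, y}"
  using assms simple_adm_removal_pair[OF assms(1-7)] adm_removal_if_simple by simp

section \<open>Removing a vertex through an induced 2K2\<close>

definition induces_2K2 :: "('a \<Rightarrow> 'a \<Rightarrow> bool) \<Rightarrow> 'a set \<Rightarrow> bool" where
  "induces_2K2 E M \<longleftrightarrow> (\<exists>u w u' w'. M = {u, w, u', w'} \<and> distinct [u, w, u', w']
     \<and> E u w \<and> E u' w' \<and> \<not> E u u' \<and> \<not> E u w' \<and> \<not> E w u' \<and> \<not> E w w')"

lemma adm_removal_even_neighbour_first:
  assumes fin: "finite W" and irr: "irreflp E" and "c \<in> W" "r \<in> W" "E c r"
    and "even (degree W E r)" "odd (degree W E c)"
  shows "adm_removal W E {r, c}"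
proof -
  have "degree W E c = degree (W - {r}) E c + 1"
    using degree_Diff_singleton[OF fin, of r E c] assms by simp
  then have "adm_removal (W - {r}) E {c}"
    using assms irr by (intro adm_removal_singleton) (auto dest: irreflpD)
  then have "adm_removal W E ({r} \<union> {c})"
    using adm_removal_trans adm_removal_singleton[OF fin irr] assms by blast
  then show ?thesis by (simp add: insert_commute)
qed

lemma adm_removal_via_even_edge:
  assumes fin: "finite W" and sym: "symp E" and irr: "irreflp E"
    and "c \<in> W" "r \<in> W" "s \<in> W" "c \<noteq> r" "c \<noteq> s"
    and "E r s" "\<not> E c r" "even (degree W E r)" "odd (degree W E c)"
    and "E c s \<longleftrightarrow> odd (degree W E s)"
  shows "\<exists>X\<subseteq>{c, r, s}. c \<in> X \<and> adm_removal W E X"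
proof -
  have r: "adm_removal W E {r}" using adm_removal_singleton[OF fin irr] assms by blast
  have fin': "finite (W - {r})" using fin by simp
  have "r \<noteq> s" using assms irr by (auto dest: irreflpD)
  then have in': "c \<in> W - {r}" "s \<in> W - {r}" using assms by auto
  have deg_s: "degree W E s = degree (W - {r}) E s + 1"
    using degree_Diff_singleton[OF fin, of r E s] assms sym by (auto dest: sympD)
  have deg_c: "degree W E c = degree (W - {r}) E c"
    using degree_Diff_singleton[OF fin, of r E c] assms by simp
  show ?thesis
  proof (cases "E c s")
    case True
    then have "adm_removal (W - {r}) E {s, c}"
      using assms deg_s deg_c in' by (intro adm_removal_even_neighbour_first[OF fin' irr]) auto
    then have "adm_removal W E ({r} \<union> {s, c})" by (rule adm_removal_trans[OF r])
    then show ?thesis by (intro exI[of _ "{r} \<union> {s, c}"]) auto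
  next
    case False
    then have "adm_removal (W - {r}) E {c, s}"
      using assms deg_s deg_c in' by (intro adm_removal_pair[OF fin' sym irr]) auto
    then have "adm_removal W E ({r} \<union> {c, s})" by (rule adm_removal_trans[OF r])
    then show ?thesis by (intro exI[of _ "{r} \<union> {c, s}"]) auto
  qed
qed

lemma adm_removal_via_odd_2K2:
  assumes fin: "finite W" and sym: "symp E" and irr: "irreflp E"
    and "c \<in> W" "u \<in> W" "w \<in> W" "u' \<in> W" "c \<noteq> u" "c \<noteq> u'" "u \<noteq> u'" "w \<noteq> u'"
    and "E u w" "\<not> E u u'" "\<not> E w u'" "E c u" "E c u'" "E c w"
    and "odd (degree W E u)" "odd (degree W E u')" "odd (degree W E w)" "odd (degree W E c)"
  shows "adm_removal W E {u, u', w, c}"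
proof -
  have uu': "adm_removal W E {u, u'}" using adm_removal_pair[OF fin sym irr] assms by blast
  have deg: "degree W E x = degree (W - {u, u'}) E x + (if E x u then 1 else 0) + (if E x u' then 1 else 0)"
    for x
  proof -
    have "W - {u} - {u'} = W - {u, u'}" by auto
    then show ?thesis
      using degree_Diff_singleton[OF fin, of u E x] degree_Diff_singleton[of "W - {u}" u' E x] fin assms
      by simp
  qed
  have "adm_removal (W - {u, u'}) E {w, c}"
  proof (rule adm_removal_even_neighbour_first[OF _ irr])
    show "even (degree (W - {u, u'}) E w)" "odd (degree (W - {u, u'}) E c)"
      using deg[of w] deg[of c] assms by (auto dest: sympD irreflpD)
    show "c \<in> W - {u, u'}" "w \<in> W - {u, u'}"
      using assms irr by (auto dest: irreflpD)
  qed (use assms fin sym in \<open>auto dest: sympD\<close>)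
  then have "adm_removal W E ({u, u'} \<union> {w, c})" by (rule adm_removal_trans[OF uu'])
  then show ?thesis by (simp add: insert_commute)
qed

lemma adm_removal_through_2K2_parity_aligned:
  assumes fin: "finite W" and sym: "symp E" and irr: "irreflp E"
    and c: "c \<in> W" and "M \<subseteq> W" "c \<notin> M" "induces_2K2 E M" "odd (degree W E c)"
    and parity: "\<And>r. r \<in> M \<Longrightarrow> E c r \<longleftrightarrow> odd (degree W E r)"
  shows "\<exists>X\<subseteq>insert c M. c \<in> X \<and> adm_removal W E X"
proof -
  obtain u w u' w' where M: "M = {u, w, u', w'}" "distinct [u, w, u', w']"
    and edges: "E u w" "E u' w'" "\<not> E u u'" "\<not> E u w'" "\<not> E w u'" "\<not> E w w'"
    using assms(7) unfolding induces_2K2_def by blast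
  have inW: "r \<in> W" and ne: "c \<noteq> r" if "r \<in> M" for r using assms that by auto
  show ?thesis
  proof (cases "\<exists>r\<in>M. \<not> E c r")
    case True
    then obtain r where r: "r \<in> M" "\<not> E c r" by blast
    moreover have "\<exists>s\<in>M. E r s" using r(1) edges sympD[OF sym] unfolding M(1) by blast
    then obtain s where s: "s \<in> M" "E r s" by blast
    moreover have "even (degree W E r)" using parity[OF r(1)] r(2) by simp
    ultimately obtain X where "X \<subseteq> {c, r, s}" "c \<in> X" "adm_removal W E X"
      using adm_removal_via_even_edge[OF fin sym irr c inW[OF r(1)] inW[OF s(1)] ne[OF r(1)]
          ne[OF s(1)] s(2) r(2) _ assms(8) parity[OF s(1)]] by blast
    then show ?thesis using r(1) s(1) by (intro exI[of _ X]) auto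
  next
    case False
    then have adj: "E c u" "E c w" "E c u'" "E c w'" unfolding M(1) by blast+
    have in_M: "u \<in> M" "w \<in> M" "u' \<in> M" unfolding M(1) by simp_all
    have "odd (degree W E x)" if "x \<in> M" for x
      using parity[OF that] adj that unfolding M(1) by blast
    then have "adm_removal W E {u, u', w, c}"
      using M(2) in_M
      by (intro adm_removal_via_odd_2K2[OF fin sym irr c inW[OF in_M(1)] inW[OF in_M(2)]
            inW[OF in_M(3)] ne[OF in_M(1)] ne[OF in_M(3)] _ _ edges(1,3,5) adj(1,3,2) _ _ _ assms(8)])
        auto
    then show ?thesis unfolding M(1) by (intro exI[of _ "{u, u', w, c}"]) auto
  qed
qed

lemma adm_removal_through_2K2:
  assumes fin: "finite W" and sym: "symp E" and irr: "irreflp E"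
    and c: "c \<in> W" and M: "M \<subseteq> W" "c \<notin> M" "induces_2K2 E M"
  shows "\<exists>X\<subseteq>insert c M. c \<in> X \<and> adm_removal W E X"
proof -
  have inW: "r \<in> W" and ne: "c \<noteq> r" if "r \<in> M" for r using M that by auto
  consider (even_c) "even (degree W E c)"
    | (even_nb) r where "r \<in> M" "E c r" "even (degree W E r)" "odd (degree W E c)"
    | (odd_non_nb) r where "r \<in> M" "\<not> E c r" "odd (degree W E r)" "odd (degree W E c)"
    | (aligned) "odd (degree W E c)" "\<And>r. r \<in> M \<Longrightarrow> E c r \<longleftrightarrow> odd (degree W E r)"
    by blast
  then show ?thesis
  proof cases
    case even_c
    then show ?thesis using adm_removal_singleton[OF fin irr c] by (intro exI[of _ "{c}"]) simp
  next
    case (even_nb r)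
    then have "adm_removal W E {r, c}"
      by (intro adm_removal_even_neighbour_first[OF fin irr c inW])
    then show ?thesis using even_nb(1) by (intro exI[of _ "{r, c}"]) simp
  next
    case (odd_non_nb r)
    then have "adm_removal W E {c, r}" by (intro adm_removal_pair[OF fin sym irr c inW ne])
    then show ?thesis using odd_non_nb(1) by (intro exI[of _ "{c, r}"]) simp
  next
    case aligned
    then show ?thesis by (rule adm_removal_through_2K2_parity_aligned[OF fin sym irr c M])
  qed
qed

lemma adm_removal_through_2K2_family:
  assumes sym: "symp E" and irr: "irreflp E"
  shows "finite W \<Longrightarrow> S \<subseteq> W \<Longrightarrow> card S \<le> k \<Longrightarrow> \<forall>i<k. induces_2K2 E (M i) \<and> M i \<subseteq> W - S
    \<Longrightarrow> disjoint_family_on M {..<k} \<Longrightarrow> \<exists>X. S \<subseteq> X \<and> X \<subseteq> S \<union> (\<Union>i<k. M i) \<and> adm_removal W E X"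
proof (induction k arbitrary: W S)
  case 0
  then have "S = {}" using finite_subset[of S W] by simp
  then show ?case using adm_removal.adm_empty by blast
next
  case (Suc k)
  show ?case
  proof (cases "S = {}")
    case True
    then show ?thesis using adm_removal.adm_empty by blast
  next
    case False
    then obtain c where c: "c \<in> S" by blast
    have Mk: "induces_2K2 E (M k)" "M k \<subseteq> W - S" using Suc.prems(4) by simp_all
    then have "c \<in> W" "M k \<subseteq> W" "c \<notin> M k" using Suc.prems(2) c by auto
    then obtain X1 where X1: "X1 \<subseteq> insert c (M k)" "c \<in> X1" "adm_removal W E X1"
      using adm_removal_through_2K2[OF Suc.prems(1) sym irr _ _ _ Mk(1)] by blast
    have modules: "\<forall>i<k. induces_2K2 E (M i) \<and> M i \<subseteq> W - X1 - (S - {c})"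
    proof (intro allI impI)
      fix i assume "i < k"
      then have "M i \<inter> M k = {}" "induces_2K2 E (M i)" "M i \<subseteq> W - S"
        using Suc.prems(4,5) unfolding disjoint_family_on_def by simp_all
      then show "induces_2K2 E (M i) \<and> M i \<subseteq> W - X1 - (S - {c})" using c X1(1) by auto
    qed
    have card: "card (S - {c}) \<le> k" using Suc.prems(3) c by simp
    have sub: "S - {c} \<subseteq> W - X1" using Suc.prems(2) Mk(2) X1(1) by auto
    have disj: "disjoint_family_on M {..<k}"
      using Suc.prems(5) by (rule disjoint_family_on_mono[rotated]) simp
    obtain X2 where X2: "S - {c} \<subseteq> X2" "X2 \<subseteq> (S - {c}) \<union> (\<Union>i<k. M i)"
        "adm_removal (W - X1) E X2"
      using Suc.IH[OF _ sub card modules disj] Suc.prems(1) by auto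
    have "X1 \<union> X2 \<subseteq> S \<union> (\<Union>i<Suc k. M i)" using X1(1) X2(2) c by (auto simp: lessThan_Suc)
    moreover have "S \<subseteq> X1 \<union> X2" using X1(2) X2(1) by blast
    ultimately show ?thesis using adm_removal_trans[OF X1(3) X2(3)] by blast
  qed
qed

section \<open>Two disjoint copies of K_{5,5}\<close>

lemma F_E_triangle_free: "\<not> (F_E a b \<and> F_E b c \<and> F_E a c)"
  by (auto simp: F_E_def)

lemma F_E_induces_2K2:
  assumes "i < 5"
  shows "induces_2K2 F_E {i, 5 + i, 10 + i, 15 + i}"
proof -
  have "i div 10 = 0" "(5 + i) div 10 = 0" "(10 + i) div 10 = 1" "(15 + i) div 10 = 1"
    "i mod 10 = i" "(5 + i) mod 10 = 5 + i" "(10 + i) mod 10 = i" "(15 + i) mod 10 = 5 + i"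
    using assms by presburger+
  then show ?thesis unfolding induces_2K2_def using assms
    by (intro exI[of _ i] exI[of _ "5 + i"] exI[of _ "10 + i"] exI[of _ "15 + i"])
      (simp add: F_E_def F_V_def)
qed

lemma induces_2K2_inv_into:
  assumes f: "bij_betw f A B" and iso: "\<forall>x\<in>A. \<forall>y\<in>A. E x y \<longleftrightarrow> E' (f x) (f y)"
    and "N \<subseteq> B" "induces_2K2 E' N"
  shows "induces_2K2 E (inv_into A f ` N)"
proof -
  let ?g = "inv_into A f"
  obtain u w u' w' where N: "N = {u, w, u', w'}" "distinct [u, w, u', w']"
    and edges: "E' u w" "E' u' w'" "\<not> E' u u'" "\<not> E' u w'" "\<not> E' w u'" "\<not> E' w w'"
    using assms(4) unfolding induces_2K2_def by blast
  have fB: "f ` A = B" using f by (simp add: bij_betw_def)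
  have E_iff: "E (?g a) (?g b) \<longleftrightarrow> E' a b" if "a \<in> N" "b \<in> N" for a b
  proof -
    have "?g a \<in> A" "?g b \<in> A" "f (?g a) = a" "f (?g b) = b"
      using that assms(3) fB by (auto intro: inv_into_into f_inv_into_f)
    then show ?thesis using iso by metis
  qed
  have "inj_on ?g N" using inj_on_inv_into[of N f A] assms(3) fB by blast
  then have "distinct (map ?g [u, w, u', w'])" using N by (simp only: distinct_map set_simps)
  then show ?thesis unfolding induces_2K2_def
    using E_iff edges unfolding N(1)
    by (intro exI[of _ "?g u"] exI[of _ "?g w"] exI[of _ "?g u'"] exI[of _ "?g w'"]) simp
qed

lemma induced_iso_F_2K2_family:
  assumes "induced_iso_F V E R"
  obtains M :: "nat \<Rightarrow> 'a set" where "\<forall>i<5. induces_2K2 E (M i) \<and> M i \<subseteq> R" "disjoint_family_on M {..<5}"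
proof -
  obtain f where f: "bij_betw f R F_V" and iso: "\<forall>x\<in>R. \<forall>y\<in>R. E x y \<longleftrightarrow> F_E (f x) (f y)"
    using assms unfolding induced_iso_F_def by blast
  define N :: "nat \<Rightarrow> nat set" where "N i = {i, 5 + i, 10 + i, 15 + i}" for i
  have fR: "f ` R = F_V" using f by (simp add: bij_betw_def)
  have N_sub: "N i \<subseteq> F_V" if "i < 5" for i using that unfolding N_def F_V_def by auto
  have "induces_2K2 E (inv_into R f ` N i) \<and> inv_into R f ` N i \<subseteq> R" if "i < 5" for i
  proof
    show "induces_2K2 E (inv_into R f ` N i)"
      using induces_2K2_inv_into[OF f iso N_sub[OF that]] F_E_induces_2K2[OF that] unfolding N_def
      by blast
    show "inv_into R f ` N i \<subseteq> R" using N_sub[OF that] fR inv_into_into[of _ f R] by blast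
  qed
  moreover have "disjoint_family_on (\<lambda>i. inv_into R f ` N i) {..<5}"
    unfolding disjoint_family_on_def
  proof (intro ballI impI)
    fix i j :: nat assume ij: "i \<in> {..<5}" "j \<in> {..<5}" "i \<noteq> j"
    have "N i \<inter> N j = {}" using ij unfolding N_def by auto
    moreover have "inj_on (inv_into R f) F_V" using inj_on_inv_into[of F_V f R] fR by simp
    ultimately show "inv_into R f ` N i \<inter> inv_into R f ` N j = {}"
      using inj_on_image_Int[of "inv_into R f" F_V "N i" "N j"] N_sub ij by simp
  qed
  ultimately show ?thesis using that[of "\<lambda>i. inv_into R f ` N i"] by blast
qed

lemma induced_iso_F_clique_card_le_2:
  assumes "induced_iso_F V E R" "Q \<subseteq> R" "clique V E Q"
  shows "card Q \<le> 2"
proof (rule ccontr)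
  assume "\<not> card Q \<le> 2"
  then obtain T where "T \<subseteq> Q" "card T = 3" using obtain_subset_with_card_n[of 3 Q] by force
  then obtain a b c where abc: "a \<in> Q" "b \<in> Q" "c \<in> Q" "a \<noteq> b" "b \<noteq> c" "a \<noteq> c"
    by (auto simp: card_3_iff)
  then have "E a b" "E b c" "E a c" using assms(3) unfolding clique_def by blast+
  moreover obtain f where "\<forall>x\<in>R. \<forall>y\<in>R. E x y \<longleftrightarrow> F_E (f x) (f y)"
    using assms(1) unfolding induced_iso_F_def by blast
  ultimately have "F_E (f a) (f b)" "F_E (f b) (f c)" "F_E (f a) (f c)"
    using abc(1-3) assms(2) by blast+
  then show False using F_E_triangle_free by blast
qed

section \<open>Removing the copy of F\<close>

lemma graph_symp_irreflp:
  assumes "graph V E"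
  shows "finite V" "symp E" "irreflp E"
  using assms unfolding graph_def symp_def irreflp_def by blast+

lemma adm_removal_in_F_leaving_odd_clique:
  fixes V :: "'a set"
  assumes "graph V E" "induced_iso_F V E R" "S \<subseteq> V - R" "card S \<le> 5"
  obtains X where "S \<subseteq> X" "X \<subseteq> S \<union> R" "adm_removal V E X" "clique V E (R - X)"
    "\<forall>x\<in>R - X. odd (degree (V - X) E x)"
proof -
  note G = graph_symp_irreflp[OF assms(1)]
  have RV: "R \<subseteq> V" using assms(2) unfolding induced_iso_F_def by blast
  obtain M :: "nat \<Rightarrow> 'a set"
    where M: "\<forall>i<5. induces_2K2 E (M i) \<and> M i \<subseteq> R" "disjoint_family_on M {..<5}"
    using induced_iso_F_2K2_family[OF assms(2)] by blast
  have "\<forall>i<5. induces_2K2 E (M i) \<and> M i \<subseteq> V - S"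
  proof (intro allI impI)
    fix i :: nat assume "i < 5"
    then show "induces_2K2 E (M i) \<and> M i \<subseteq> V - S" using M(1) RV assms(3) by auto
  qed
  moreover have "S \<subseteq> V" using assms(3) by blast
  ultimately obtain Xs where Xs: "S \<subseteq> Xs" "Xs \<subseteq> S \<union> (\<Union>i<5. M i)" "adm_removal V E Xs"
    using adm_removal_through_2K2_family[OF G(2,3) G(1) _ assms(4) _ M(2)] by blast
  have "(\<Union>i<5. M i) \<subseteq> R" using M(1) by blast
  then have XsR: "Xs \<subseteq> S \<union> R" using Xs(2) by blast
  have rest: "finite (V - Xs)" "R - Xs \<subseteq> V - Xs" using G(1) RV by auto
  obtain X' where X': "X' \<subseteq> R - Xs" "adm_removal (V - Xs) E X'"
      "clique (V - Xs) E (R - Xs - X')" "\<forall>x\<in>R - Xs - X'. odd (degree (V - Xs - X') E x)"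
    using adm_removal_leaving_odd_clique[OF G(2,3) rest] by blast
  have eqs: "R - Xs - X' = R - (Xs \<union> X')" "V - Xs - X' = V - (Xs \<union> X')" by auto
  have "Xs \<union> X' \<subseteq> S \<union> R" using XsR X'(1) by blast
  moreover have "adm_removal V E (Xs \<union> X')" using adm_removal_trans[OF Xs(3) X'(2)] .
  moreover have "clique V E (R - (Xs \<union> X'))" using X'(3) RV unfolding clique_def eqs by blast
  moreover have "\<forall>x\<in>R - (Xs \<union> X'). odd (degree (V - (Xs \<union> X')) E x)" using X'(4) unfolding eqs .
  moreover have "S \<subseteq> Xs \<union> X'" using Xs(1) by blast
  ultimately show ?thesis using that by blast
qed

lemma double_mod4_eq_0_iff: "(2 * n) mod 4 = 0 \<longleftrightarrow> even (n :: nat)"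
  using mod_mult_mult1[of 2 n 2] by (simp add: even_iff_mod_2_eq_zero)

lemma add_double_sum3_mod4:
  fixes P x y z :: nat
  assumes "even P" "(P + 2 * x) mod 4 \<noteq> 0" "(P + 2 * y) mod 4 \<noteq> 0" "(P + 2 * z) mod 4 \<noteq> 0"
  shows "(P + 2 * (x + y + z) + 6) mod 4 = 0"
proof -
  obtain p where P: "P = 2 * p" using assms(1) by blast
  have "odd (p + x)" "odd (p + y)" "odd (p + z)"
    using assms(2-4) double_mod4_eq_0_iff unfolding P by (metis distrib_left)+
  then have "even (p + (x + y + z) + 3)" by simp
  then show ?thesis using double_mod4_eq_0_iff[of "p + (x + y + z) + 3"] unfolding P
    by (simp add: distrib_left)
qed

lemma small_subset_with_potential_mod4:
  assumes "graph V E" "R \<subseteq> V" "C \<subseteq> V - R" "clique V E C" "3 \<le> card C"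
  obtains S where "S \<subseteq> C" "S \<noteq> {}" "card S \<le> 3" "potential V E (R \<union> S) mod 4 = 0"
proof -
  note G = graph_symp_irreflp[OF assms(1)]
  define P where "P = potential V E R"
  define g where "g c = degree (V - R) E c" for c
  have "finite R" using finite_subset[OF assms(2) G(1)] .
  then have "even P" unfolding P_def potential_def using arc_count_self_even[OF G(2,3)] by simp
  have potential_Un_mod4: "potential V E (R \<union> S) mod 4 = (P + 2 * (\<Sum>c\<in>S. g c) + card S * (card S - 1)) mod 4"
    if S: "S \<subseteq> C" for S
  proof -
    have fin: "finite S" using finite_subset[of S V] S assms(3) G(1) by blast
    have cl: "clique V E S" using S assms(4) unfolding clique_def by blast
    have "(R \<union> S) - R = S" using S assms(3) by blast
    moreover have "potential V E (R \<union> S)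
        = potential V E R + potential (V - R) E ((R \<union> S) - R) + 4 * arc_count E ((R \<union> S) - R) R"
      by (rule potential_Diff[OF G(2,1)]) (use S assms(2,3) in auto)
    ultimately have "potential V E (R \<union> S)
        = (P + 2 * (\<Sum>c\<in>S. g c) + card S * (card S - 1)) + 4 * arc_count E S R"
      unfolding P_def g_def using potential_clique[OF G(3) cl fin, of "V - R"] by simp
    then show ?thesis by (simp only: mod_mult_self2)
  qed
  show ?thesis
  proof (cases "\<exists>c\<in>C. (P + 2 * g c) mod 4 = 0")
    case True
    then obtain c where c: "c \<in> C" "(P + 2 * g c) mod 4 = 0" ..
    then have S: "{c} \<subseteq> C" "{c} \<noteq> {}" "card {c} \<le> 3" by simp_all
    moreover have "potential V E (R \<union> {c}) mod 4 = 0" using potential_Un_mod4[OF S(1)] c(2) by simp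
    ultimately show ?thesis by (rule that)
  next
    case False
    \<comment> \<open>then P + 2 g c = 2 (mod 4) for every c in C, and any three vertices of C work\<close>
    obtain T where T: "T \<subseteq> C" "card T = 3" using obtain_subset_with_card_n[OF assms(5)] by blast
    then obtain a b d where abd: "T = {a, b, d}" "a \<noteq> b" "b \<noteq> d" "a \<noteq> d"
      by (auto simp: card_3_iff)
    have "(P + 2 * g a) mod 4 \<noteq> 0" "(P + 2 * g b) mod 4 \<noteq> 0" "(P + 2 * g d) mod 4 \<noteq> 0"
      using False T(1) abd(1) by auto
    then have "(P + 2 * (g a + g b + g d) + 6) mod 4 = 0" by (intro add_double_sum3_mod4[OF \<open>even P\<close>])
    moreover have "(\<Sum>c\<in>T. g c) = g a + g b + g d" using abd by simp
    ultimately have "potential V E (R \<union> T) mod 4 = 0" using potential_Un_mod4[OF T(1)] T(2) by simp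
    moreover have "T \<noteq> {}" using T(2) by auto
    ultimately show ?thesis using T by (intro that) auto
  qed
qed

lemma adm_removal_of_F_and_part_of_clique:
  assumes "graph V E" "induced_iso_F V E R" "C \<subseteq> V - R" "clique V E C" "3 \<le> card C"
  obtains S X where "S \<subseteq> C" "S \<noteq> {}" "X \<subseteq> C \<union> R" "adm_removal V E X" "(C \<union> R) - X = C - S"
proof -
  note G = graph_symp_irreflp[OF assms(1)]
  have RV: "R \<subseteq> V" using assms(2) unfolding induced_iso_F_def by blast
  obtain S where S: "S \<subseteq> C" "S \<noteq> {}" "card S \<le> 3" "potential V E (R \<union> S) mod 4 = 0"
    by (rule small_subset_with_potential_mod4[OF assms(1) RV assms(3-5)])
  have "S \<subseteq> V - R" "card S \<le> 5" using S(1,3) assms(3) by auto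
  then obtain X where X: "S \<subseteq> X" "X \<subseteq> S \<union> R" "adm_removal V E X" "clique V E (R - X)"
      "\<forall>x\<in>R - X. odd (degree (V - X) E x)"
    by (rule adm_removal_in_F_leaving_odd_clique[OF assms(1,2)])
  have "potential (V - X) E ((R \<union> S) - X) mod 4 = 0"
    using potential_Diff_adm_removal_mod4[OF G(1,2) _ _ X(3) S(4)] X(2) RV S(1) assms(3) by auto
  moreover have "(R \<union> S) - X = R - X" using X(1) by blast
  moreover have "finite (R - X)" using finite_subset[OF RV G(1)] by blast
  ultimately have "R - X = {}"
    using odd_clique_eq_empty_if_potential_mod4[OF G(3) X(4) _
        induced_iso_F_clique_card_le_2[OF assms(2) _ X(4)] X(5)] by auto
  then have "(C \<union> R) - X = C - S" using X(1,2) S(1) assms(3) by blast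
  then show ?thesis using that S(1,2) X(2,3) by blast
qed

theorem mainTheorem8:
  fixes V :: "'a set" and E :: "'a \<Rightarrow> 'a \<Rightarrow> bool" and R C :: "'a set" and m :: nat
  assumes "graph V E"
    and "induced_iso_F V E R"
    and "C \<subseteq> V - R"
    and "clique V E C"
    and "card C = m"
  shows "\<exists>X. X \<subseteq> C \<union> R \<and> adm_removal V E X \<and>
           clique V E ((C \<union> R) - X) \<and> card ((C \<union> R) - X) \<le> max (m - 1) 2"
proof (cases "m \<le> 3")
  case True
  then have "card C \<le> 5" using assms(5) by simp
  then obtain X where X: "C \<subseteq> X" "X \<subseteq> C \<union> R" "adm_removal V E X" "clique V E (R - X)"
    by (rule adm_removal_in_F_leaving_odd_clique[OF assms(1-3)])
  moreover have "(C \<union> R) - X = R - X" using X(1) by blast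
  moreover have "card (R - X) \<le> 2" using induced_iso_F_clique_card_le_2[OF assms(2) _ X(4)] by blast
  ultimately show ?thesis by (intro exI[of _ X]) auto
next
  case False
  then have "3 \<le> card C" using assms(5) by simp
  then obtain S X where SX: "S \<subseteq> C" "S \<noteq> {}" "X \<subseteq> C \<union> R" "adm_removal V E X"
      "(C \<union> R) - X = C - S"
    by (rule adm_removal_of_F_and_part_of_clique[OF assms(1-4)])
  have "finite S" using finite_subset[of S V] SX(1) assms(1,3) unfolding graph_def by blast
  then have "card S \<ge> 1" using SX(2) by (simp add: Suc_le_eq card_gt_0_iff)
  then have "card (C - S) \<le> m - 1" using card_Diff_subset[OF \<open>finite S\<close> SX(1)] assms(5) by simp
  moreover have "clique V E (C - S)" using assms(4) unfolding clique_def by blast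
  ultimately show ?thesis using SX(3-5) by (intro exI[of _ X]) auto
qed

end
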